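(* Let $m\ge1$, $C_m$ cyclic with generator $c$, and for $d\mid m$ let $\zeta_d$ be a primitive $d$th root of unity. Consider the Wedderburn isomorphism $\omega_{\mathbb{Q},m}\colon\mathbb{Q}C_m\to\prod_{d\mid m}\mathbb{Q}(\zeta_d)$, $c\mapsto(\zeta_d)_{d\mid m}$. Given, for each $d\mid m$, an element $a_d(c)=\sum_{i\in\mathbb{Z}/m}a_{d,i}c^i\in\mathbb{Q}C_m$, write $a_d(\zeta_d)=\sum_{i\in\mathbb{Z}/m}a_{d,i}\zeta_d^i$. Then \[ \omega_{\mathbb{Q},m}^{-1}\bigl((a_d(\zeta_d))_{d\mid m}\bigr)=\frac1m\sum_{l\in\mathbb{Z}/m}c^l\Bigl[\sum_{d\mid m}d\sum_{k\in\mathbb{Z}/(m/d')}a_{d,\,l-kd'}\prod_{p\mid d,\ p\nmid k}\Bigl(-\frac1p\Bigr)\prod_{p\mid d,\ p\mid k}\Bigl(1-\frac1p\Bigr)\Bigr], \] where for $d\mid m$ the divisor $d'\mid m$ is defined by $v_p(d')=\max(v_p(d)-1,0)$ for all primes $p$, and the products run over primes $p$.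
   Context: $v_p$ is the $p$-adic valuation. For $p\mid d$ one has $p\mid m/d'$, so divisibility of $k\in\mathbb{Z}/(m/d')$ by $p$ is well defined, and $l-kd'$ is well defined in $\mathbb{Z}/m$. *)

theory Defs
  imports Complex_Main "HOL-Computational_Algebra.Primes"
begin

text \<open>Elements of the group algebra Q C_m are represented by their coefficient
  functions x :: nat => rat, where x i (for i < m) is the coefficient of c^i,
  i.e. indices in Z/m are represented by 0,...,m-1.\<close>

definition prim_root_unity :: "nat \<Rightarrow> complex \<Rightarrow> bool" where
  "prim_root_unity d z \<longleftrightarrow> z ^ d = 1 \<and> (\<forall>j. 0 < j \<and> j < d \<longrightarrow> z ^ j \<noteq> 1)"

definition eval_at :: "nat \<Rightarrow> (nat \<Rightarrow> rat) \<Rightarrow> complex \<Rightarrow> complex" where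
  "eval_at m a z = (\<Sum>i<m. of_rat (a i) * z ^ i)"

definition wedderburn :: "nat \<Rightarrow> (nat \<Rightarrow> complex) \<Rightarrow> (nat \<Rightarrow> rat) \<Rightarrow> nat \<Rightarrow> complex" where
  "wedderburn m \<zeta> x = (\<lambda>d. if d dvd m then eval_at m x (\<zeta> d) else 0)"

definition dprime :: "nat \<Rightarrow> nat" where
  "dprime d = (\<Prod>p\<in>prime_factors d. p ^ (multiplicity p d - 1))"

definition inv_coeff :: "nat \<Rightarrow> (nat \<Rightarrow> nat \<Rightarrow> rat) \<Rightarrow> nat \<Rightarrow> rat" where
  "inv_coeff m a l = (1 / of_nat m) *
     (\<Sum>d\<in>{d. d dvd m}. of_nat d *
        (\<Sum>k<m div dprime d.
           a d (nat ((int l - int k * int (dprime d)) mod int m)) *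
           (\<Prod>p\<in>{p\<in>prime_factors d. \<not> p dvd k}. - (1 / of_nat p)) *
           (\<Prod>p\<in>{p\<in>prime_factors d. p dvd k}. 1 - 1 / of_nat p)))"

end

theory Submission
  imports Defs
begin

text \<open>
  Put w(d, k) = \<Prod>p|d ([p | k] - 1/p), the weight appearing in the formula. Evaluating the
  claimed preimage at a primitive e-th root of unity z (e | m) and shifting the summation index
  gives \<Sum>d|m a_d(z) * (d/m) \<Sum>k<m/d' w(d, k) z^(k d'). Expanding w(d, k) over the sets T of
  prime divisors of d turns the inner sum into geometric sums over the multiples of \<Prod>T, and
  what remains is the inclusion-exclusion sum \<Sum>T (-1)^|P - T| [e | d' \<Prod>T] over the set P of
  primes dividing d. It factors prime by prime into \<Prod>p\<in>P ([v_p(e) \<le> v_p(d)] - [v_p(e) < v_p(d)]),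
  up to the condition that every prime factor of e divides d, and so equals [d = e].
\<close>

lemma power_eq_power_mod:
  fixes z :: "'a::monoid_mult"
  assumes "z ^ e = 1"
  shows "z ^ n = z ^ (n mod e)"
proof -
  have "z ^ n = z ^ (e * (n div e) + n mod e)" by (simp only: mult_div_mod_eq)
  also have "\<dots> = (z ^ e) ^ (n div e) * z ^ (n mod e)" by (simp only: power_add power_mult)
  also have "\<dots> = z ^ (n mod e)" using assms by simp
  finally show ?thesis .
qed

lemma sum_shift_mod_power:
  fixes z :: "'a::comm_semiring_1"
  assumes "m > 0" "z ^ m = 1"
  shows "(\<Sum>l<m. f (nat ((int l - int c) mod int m)) * z ^ l) = z ^ c * (\<Sum>i<m. f i * z ^ i)"
proof -
  define \<sigma> where "\<sigma> l = nat ((int l - int c) mod int m)" for l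
  have \<sigma>_int: "int (\<sigma> l) = (int l - int c) mod int m" for l
    using assms(1) by (simp add: \<sigma>_def)
  have \<sigma>_add: "(\<sigma> l + c) mod m = l mod m" for l
  proof -
    have "int ((\<sigma> l + c) mod m) = int (l mod m)"
      by (simp add: \<sigma>_int of_nat_mod mod_add_left_eq)
    then show ?thesis by simp
  qed
  have bij: "bij_betw \<sigma> {..<m} {..<m}"
  proof (rule bij_betw_byWitness[where f' = "\<lambda>i. (i + c) mod m"])
    show "\<forall>l\<in>{..<m}. (\<sigma> l + c) mod m = l"
      by (simp add: \<sigma>_add)
    show "\<forall>i\<in>{..<m}. \<sigma> ((i + c) mod m) = i"
      by (simp add: \<sigma>_def mod_diff_left_eq of_nat_mod)
    show "\<sigma> ` {..<m} \<subseteq> {..<m}" "(\<lambda>i. (i + c) mod m) ` {..<m} \<subseteq> {..<m}"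
      using assms(1) by (auto simp: \<sigma>_def nat_less_iff)
  qed
  have shift: "f (\<sigma> l) * z ^ l = z ^ c * (f (\<sigma> l) * z ^ \<sigma> l)" for l
  proof -
    have "z ^ l = z ^ (\<sigma> l + c)"
      using power_eq_power_mod[OF assms(2), of l] power_eq_power_mod[OF assms(2), of "\<sigma> l + c"]
      by (simp only: \<sigma>_add)
    then show ?thesis by (simp add: power_add mult_ac)
  qed
  have "(\<Sum>l<m. f (\<sigma> l) * z ^ l) = z ^ c * (\<Sum>l<m. f (\<sigma> l) * z ^ \<sigma> l)"
    unfolding sum_distrib_left by (rule sum.cong[OF refl shift])
  also have "(\<Sum>l<m. f (\<sigma> l) * z ^ \<sigma> l) = (\<Sum>i<m. f i * z ^ i)"
    using sum.reindex_bij_betw[OF bij, of "\<lambda>i. f i * z ^ i"] by simp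
  finally show ?thesis by (simp only: \<sigma>_def)
qed

lemma sum_multiples_power:
  fixes y :: "'a::field"
  assumes "s > 0" "s dvd N" "y ^ N = 1"
  shows "(\<Sum>k<N. of_bool (s dvd k) * y ^ k) = of_bool (y ^ s = 1) * of_nat (N div s)"
proof -
  have multiples: "{..<N} \<inter> {k. s dvd k} = (\<lambda>j. s * j) ` {..<N div s}"
    using assms(1,2) by (auto simp: dvd_def)
  have "(\<Sum>k<N. of_bool (s dvd k) * y ^ k) = (\<Sum>j<N div s. (y ^ s) ^ j)"
    using assms(1) by (simp add: multiples, subst sum.reindex) (auto simp: inj_on_def power_mult)
  also have "\<dots> = of_bool (y ^ s = 1) * of_nat (N div s)"
  proof -
    have "(y ^ s) ^ (N div s) = 1" using assms by (simp flip: power_mult)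
    then show ?thesis by (simp add: sum_gp_strict)
  qed
  finally show ?thesis .
qed

lemma prod_of_bool:
  "finite A \<Longrightarrow> (\<Prod>x\<in>A. of_bool (P x)) = (of_bool (\<forall>x\<in>A. P x) :: 'a::comm_semiring_1)"
  by (induction A rule: finite_induct) auto

lemma prod_minus_inverse_mult_prod:
  assumes "finite A" "0 \<notin> A"
  shows "(\<Prod>p\<in>A. - (1 / of_nat p)) * of_nat (\<Prod>A) = ((-1) ^ card A :: 'a::field_char_0)"
proof -
  have "(\<Prod>p\<in>A. - (1 / of_nat p)) * of_nat (\<Prod>A) = (\<Prod>p\<in>A. - (1 / of_nat p) * (of_nat p :: 'a))"
    by (simp only: of_nat_prod prod.distrib)
  also have "\<dots> = (\<Prod>p\<in>A. -1)"
    using assms(2) by (intro prod.cong refl) (auto intro: gr0I)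
  finally show ?thesis by simp
qed

lemma prod_primes_dvd_iff:
  fixes k :: nat
  assumes "finite T" "\<And>p. p \<in> T \<Longrightarrow> prime p"
  shows "\<Prod>T dvd k \<longleftrightarrow> (\<forall>p\<in>T. p dvd k)"
  using assms
proof (induction T rule: finite_induct)
  case (insert q T)
  have "coprime q (\<Prod>T)"
    using insert.hyps(2) insert.prems by (intro prod_coprime_right) (metis insert_iff primes_coprime)
  then have "q * \<Prod>T dvd k \<longleftrightarrow> q dvd k \<and> \<Prod>T dvd k"
    by (meson divides_mult dvd_mult_left dvd_mult_right)
  with insert show ?case by simp
qed simp

lemma dvd_iff_multiplicity_le:
  fixes x y :: nat
  assumes "x \<noteq> 0" "y \<noteq> 0"
  shows "x dvd y \<longleftrightarrow> (\<forall>p. prime p \<longrightarrow> multiplicity p x \<le> multiplicity p y)"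
  using assms dvd_imp_multiplicity_le multiplicity_le_imp_dvd by blast

lemma prod_prime_factors_mult_dprime:
  assumes "d > 0"
  shows "\<Prod>(prime_factors d) * dprime d = d"
proof -
  have "\<Prod>(prime_factors d) * dprime d = (\<Prod>p\<in>prime_factors d. p * p ^ (multiplicity p d - 1))"
    by (simp add: dprime_def prod.distrib)
  also have "\<dots> = (\<Prod>p\<in>prime_factors d. p ^ multiplicity p d)"
    by (intro prod.cong refl) (simp add: prime_factors_multiplicity flip: power_Suc)
  also have "\<dots> = d"
    using prime_factorization_nat[OF assms] by simp
  finally show ?thesis .
qed

lemma div_dprime_div_prod_prime_factors:
  assumes "d dvd m" "m > 0" "T \<subseteq> prime_factors d"
  shows "m div dprime d div \<Prod>T = \<Prod>(prime_factors d - T) * (m div d)"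
proof -
  have "d > 0" using assms(1,2) dvd_pos_nat by blast
  have T_pos: "\<Prod>T > 0"
    using assms(3) by (auto intro!: prod_pos simp: in_prime_factors_iff prime_gt_0_nat)
  have "\<Prod>(prime_factors d) = \<Prod>T * \<Prod>(prime_factors d - T)"
    using prod.subset_diff[OF assms(3) finite_set_mset, of "\<lambda>p. p"] by (simp add: mult.commute)
  then have "m = (\<Prod>T * (\<Prod>(prime_factors d - T) * (m div d))) * dprime d"
    using prod_prime_factors_mult_dprime[OF \<open>d > 0\<close>] assms(1) by (metis dvd_mult_div_cancel mult.assoc mult.commute)
  moreover have "dprime d > 0"
    using prod_prime_factors_mult_dprime[OF \<open>d > 0\<close>] \<open>d > 0\<close> by (metis mult_0_right neq0_conv)
  ultimately show ?thesis
    using T_pos by (metis nonzero_mult_div_cancel_left nonzero_mult_div_cancel_right neq0_conv)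
qed

lemma dvd_dprime_mult_prod_iff:
  assumes "d > 0" "e > 0" "T \<subseteq> prime_factors d"
  shows "e dvd dprime d * \<Prod>T \<longleftrightarrow>
           prime_factors e \<subseteq> prime_factors d \<and>
           (\<forall>p\<in>T. multiplicity p e \<le> multiplicity p d) \<and>
           (\<forall>p\<in>prime_factors d - T. multiplicity p e < multiplicity p d)"
proof -
  define P where "P = prime_factors d"
  define h where "h p = multiplicity p d - 1 + of_bool (p \<in> T)" for p
  have n_eq: "dprime d * \<Prod>T = (\<Prod>p\<in>P. p ^ h p)"
  proof -
    have "(\<Prod>p\<in>P. p ^ of_bool (p \<in> T)) = (\<Prod>p\<in>T. p ^ of_bool (p \<in> T))"
      using assms(3) by (intro prod.mono_neutral_right) (auto simp: P_def)
    then have "\<Prod>T = (\<Prod>p\<in>P. p ^ of_bool (p \<in> T))"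
      by simp
    then show ?thesis
      by (simp add: dprime_def h_def P_def power_add prod.distrib)
  qed
  have mult_n: "multiplicity q (dprime d * \<Prod>T) = (if q \<in> P then h q else 0)" if "prime q" for q
    unfolding n_eq using that by (intro multiplicity_prod_prime_powers) (auto simp: P_def)
  have "dprime d * \<Prod>T \<noteq> 0"
    unfolding n_eq by (auto simp: P_def)
  then have "e dvd dprime d * \<Prod>T \<longleftrightarrow>
      (\<forall>q. prime q \<longrightarrow> multiplicity q e \<le> (if q \<in> P then h q else 0))"
    using assms(2) by (simp add: dvd_iff_multiplicity_le mult_n)
  also have "\<dots> \<longleftrightarrow> prime_factors e \<subseteq> P \<and> (\<forall>p\<in>P. multiplicity p e \<le> h p)"
    using assms(2) by (auto simp: P_def prime_factors_multiplicity)
  also have "(\<forall>p\<in>P. multiplicity p e \<le> h p) \<longleftrightarrow>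
      (\<forall>p\<in>T. multiplicity p e \<le> multiplicity p d) \<and> (\<forall>p\<in>P - T. multiplicity p e < multiplicity p d)"
  proof -
    have "multiplicity p e \<le> h p \<longleftrightarrow>
        (if p \<in> T then multiplicity p e \<le> multiplicity p d else multiplicity p e < multiplicity p d)"
      if "p \<in> P" for p
      using that by (auto simp: h_def P_def prime_factors_multiplicity)
    then show ?thesis
      using assms(3) unfolding P_def by auto
  qed
  finally show ?thesis by (simp add: P_def)
qed

lemma sum_subsets_dvd_dprime_mult_prod:
  assumes "d > 0" "e > 0"
  shows "(\<Sum>T\<in>Pow (prime_factors d).
            (-1) ^ card (prime_factors d - T) * of_bool (e dvd dprime d * \<Prod>T))
         = (of_bool (d = e) :: 'a::comm_ring_1)"
proof -
  define P where "P = prime_factors d"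
  define A where "A = (prime_factors e \<subseteq> P)"
  define f :: "nat \<Rightarrow> 'a" where "f p = of_bool (multiplicity p e \<le> multiplicity p d)" for p
  define g :: "nat \<Rightarrow> 'a" where "g p = - of_bool (multiplicity p e < multiplicity p d)" for p
  have fin: "finite P" by (simp add: P_def)
  have "(-1) ^ card (P - T) * of_bool (e dvd dprime d * \<Prod>T) = of_bool A * (prod f T * prod g (P - T))"
    if "T \<subseteq> P" for T
  proof -
    have "finite T" using that fin finite_subset by blast
    then show ?thesis
      using dvd_dprime_mult_prod_iff[OF assms that[unfolded P_def]] fin
      by (simp add: f_def g_def A_def P_def prod_uminus prod_of_bool mult_ac)
  qed
  then have "(\<Sum>T\<in>Pow P. (-1) ^ card (P - T) * of_bool (e dvd dprime d * \<Prod>T))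
      = of_bool A * (\<Sum>T\<in>Pow P. prod f T * prod g (P - T))"
    by (simp add: sum_distrib_left)
  also have "\<dots> = of_bool A * (\<Prod>p\<in>P. f p + g p)"
    by (simp add: prod_add[OF fin])
  also have "(\<Prod>p\<in>P. f p + g p) = (\<Prod>p\<in>P. of_bool (multiplicity p e = multiplicity p d))"
    by (intro prod.cong refl) (auto simp: f_def g_def)
  also have "of_bool A * \<dots> = of_bool (A \<and> (\<forall>p\<in>P. multiplicity p e = multiplicity p d))"
    by (simp add: prod_of_bool fin)
  also have "A \<and> (\<forall>p\<in>P. multiplicity p e = multiplicity p d) \<longleftrightarrow> d = e"
  proof
    assume same: "A \<and> (\<forall>p\<in>P. multiplicity p e = multiplicity p d)"
    show "d = e"
    proof (rule multiplicity_eq_nat[OF assms])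
      fix p :: nat assume "prime p"
      then show "multiplicity p d = multiplicity p e"
        using same assms by (cases "p \<in> P") (auto simp: A_def P_def prime_factors_multiplicity)
    qed
  qed (simp add: A_def P_def)
  finally show ?thesis by (simp add: P_def)
qed

definition inv_weight :: "nat \<Rightarrow> nat \<Rightarrow> 'a::field" where
  "inv_weight d k = (\<Prod>p\<in>prime_factors d. of_bool (p dvd k) - 1 / of_nat p)"

lemma of_rat_inv_weight [simp]: "of_rat (inv_weight d k) = inv_weight d k"
  unfolding inv_weight_def of_rat_prod by (rule prod.cong) (auto simp: of_rat_diff of_rat_divide)

lemma inv_weight_eq_sum_subsets:
  "(inv_weight d k :: 'a::field) =
     (\<Sum>T\<in>Pow (prime_factors d). of_bool (\<Prod>T dvd k) * (\<Prod>p\<in>prime_factors d - T. - (1 / of_nat p)))"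
proof -
  have "(\<Prod>p\<in>T. of_bool (p dvd k)) * (\<Prod>p\<in>prime_factors d - T. - (1 / of_nat p)) =
      of_bool (\<Prod>T dvd k) * (\<Prod>p\<in>prime_factors d - T. - (1 / of_nat p) :: 'a)"
    if "T \<in> Pow (prime_factors d)" for T
  proof -
    have "finite T" "\<And>p. p \<in> T \<Longrightarrow> prime p"
      using that finite_subset by auto
    then show ?thesis by (simp add: prod_of_bool prod_primes_dvd_iff)
  qed
  then have "(\<Sum>T\<in>Pow (prime_factors d). (\<Prod>p\<in>T. of_bool (p dvd k)) * (\<Prod>p\<in>prime_factors d - T. - (1 / of_nat p))) =
      (\<Sum>T\<in>Pow (prime_factors d). of_bool (\<Prod>T dvd k) * (\<Prod>p\<in>prime_factors d - T. - (1 / of_nat p)) :: 'a)"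
    by (rule sum.cong[OF refl])
  then show ?thesis
    unfolding inv_weight_def diff_conv_add_uminus by (simp only: prod_add finite_set_mset)
qed

lemma sum_inv_weight_power:
  fixes y :: "'a::field_char_0"
  assumes "\<Prod>(prime_factors d) dvd N" "y ^ N = 1"
  shows "(\<Sum>k<N. inv_weight d k * y ^ k) =
           (\<Sum>T\<in>Pow (prime_factors d). (\<Prod>p\<in>prime_factors d - T. - (1 / of_nat p)) *
              (of_bool (y ^ \<Prod>T = 1) * of_nat (N div \<Prod>T)))"
proof -
  define c :: "nat set \<Rightarrow> 'a" where "c T = (\<Prod>p\<in>prime_factors d - T. - (1 / of_nat p))" for T
  have "(\<Sum>k<N. inv_weight d k * y ^ k) =
      (\<Sum>k<N. \<Sum>T\<in>Pow (prime_factors d). c T * (of_bool (\<Prod>T dvd k) * y ^ k))"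
    by (simp only: inv_weight_eq_sum_subsets c_def sum_distrib_left sum_distrib_right mult_ac)
  also have "\<dots> = (\<Sum>T\<in>Pow (prime_factors d). c T * (\<Sum>k<N. of_bool (\<Prod>T dvd k) * y ^ k))"
    by (subst sum.swap) (simp only: sum_distrib_left)
  also have "\<dots> = (\<Sum>T\<in>Pow (prime_factors d). c T * (of_bool (y ^ \<Prod>T = 1) * of_nat (N div \<Prod>T)))"
  proof (intro sum.cong refl)
    fix T assume T: "T \<in> Pow (prime_factors d)"
    then have "\<Prod>T > 0"
      by (auto intro!: prod_pos simp: prime_gt_0_nat in_prime_factors_iff)
    moreover have "\<Prod>T dvd N"
      using T assms(1) by (auto intro: dvd_trans[OF prod_dvd_prod_subset])
    ultimately show "c T * (\<Sum>k<N. of_bool (\<Prod>T dvd k) * y ^ k) =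
        c T * (of_bool (y ^ \<Prod>T = 1) * of_nat (N div \<Prod>T))"
      by (simp only: sum_multiples_power assms(2))
  qed
  finally show ?thesis by (simp only: c_def)
qed

lemma sum_inv_weight_root_of_unity:
  fixes z :: "'a::field_char_0"
  assumes "d dvd m" "e dvd m" "m > 0" and order: "\<And>n. z ^ n = 1 \<longleftrightarrow> e dvd n"
  shows "of_nat d / of_nat m * (\<Sum>k<m div dprime d. inv_weight d k * z ^ (k * dprime d)) = of_bool (d = e)"
proof -
  define P where "P = prime_factors d"
  define d' where "d' = dprime d"
  define q where "q = m div d"
  define y where "y = z ^ d'"
  have "d > 0" "e > 0" "q > 0" "m = d * q"
    using assms(1-3) by (auto simp: q_def intro: dvd_pos_nat dvd_div_eq_0_iff)
  have "d' dvd m"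
    using prod_prime_factors_mult_dprime[OF \<open>d > 0\<close>] assms(1) unfolding d'_def
    by (metis dvd_triv_right dvd_trans)
  have N_eq: "m div d' = \<Prod>P * q"
    using div_dprime_div_prod_prime_factors[of d m "{}"] assms(1,3) by (simp add: P_def d'_def q_def)
  have "y ^ (m div d') = z ^ m"
    using \<open>d' dvd m\<close> by (simp add: y_def flip: power_mult)
  then have expand: "(\<Sum>k<m div d'. inv_weight d k * y ^ k) =
      (\<Sum>T\<in>Pow P. (\<Prod>p\<in>P - T. - (1 / of_nat p)) * (of_bool (y ^ \<Prod>T = 1) * of_nat (m div d' div \<Prod>T)))"
    using sum_inv_weight_power[of d "m div d'" y] N_eq order assms(2) by (simp add: P_def)
  have summand: "of_nat d / of_nat m *
      ((\<Prod>p\<in>P - T. - (1 / of_nat p)) * (of_bool (y ^ \<Prod>T = 1) * of_nat (m div d' div \<Prod>T)))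
      = (-1) ^ card (P - T) * (of_bool (e dvd d' * \<Prod>T) :: 'a)"
    if "T \<subseteq> P" for T
  proof -
    have "y ^ \<Prod>T = 1 \<longleftrightarrow> e dvd d' * \<Prod>T"
      by (simp add: y_def order flip: power_mult)
    moreover have "of_nat d / of_nat m *
        ((\<Prod>p\<in>P - T. - (1 / of_nat p)) * (b * of_nat (m div d' div \<Prod>T)))
        = ((\<Prod>p\<in>P - T. - (1 / of_nat p)) * of_nat (\<Prod>(P - T))) * (of_nat d / of_nat m * of_nat q) * b"
      for b :: 'a
      using div_dprime_div_prod_prime_factors[of d m T] assms(1,3) that
      by (simp only: P_def d'_def q_def of_nat_mult mult_ac)
    moreover have "(\<Prod>p\<in>P - T. - (1 / of_nat p)) * of_nat (\<Prod>(P - T)) = ((-1) ^ card (P - T) :: 'a)"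
      by (rule prod_minus_inverse_mult_prod) (simp_all add: P_def)
    moreover have "of_nat d / of_nat m * of_nat q = (1 :: 'a)"
      using \<open>m = d * q\<close> \<open>d > 0\<close> \<open>q > 0\<close> by simp
    ultimately show ?thesis
      by (simp only: mult_1_right)
  qed
  have "z ^ (k * d') = y ^ k" for k
    by (simp add: y_def mult.commute flip: power_mult)
  then have "of_nat d / of_nat m * (\<Sum>k<m div d'. inv_weight d k * z ^ (k * d')) =
      (\<Sum>T\<in>Pow P. of_nat d / of_nat m * ((\<Prod>p\<in>P - T. - (1 / of_nat p)) *
         (of_bool (y ^ \<Prod>T = 1) * of_nat (m div d' div \<Prod>T))))"
    by (simp only: expand sum_distrib_left)
  also have "\<dots> = (\<Sum>T\<in>Pow P. (-1) ^ card (P - T) * of_bool (e dvd d' * \<Prod>T))"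
    using summand by (intro sum.cong refl) simp
  also have "\<dots> = of_bool (d = e)"
    using sum_subsets_dvd_dprime_mult_prod[OF \<open>d > 0\<close> \<open>e > 0\<close>] by (simp add: P_def d'_def)
  finally show ?thesis by (simp add: d'_def)
qed

lemma inv_coeff_eq:
  "inv_coeff m a l =
     (\<Sum>d | d dvd m. of_nat d / of_nat m *
        (\<Sum>k<m div dprime d. inv_weight d k * a d (nat ((int l - int (k * dprime d)) mod int m))))"
proof -
  have weight: "(\<Prod>p\<in>{p\<in>prime_factors d. \<not> p dvd k}. - (1 / of_nat p)) *
      (\<Prod>p\<in>{p\<in>prime_factors d. p dvd k}. 1 - 1 / of_nat p) = (inv_weight d k :: rat)" for d k
    unfolding inv_weight_def
    by (simp add: prod.If_cases of_bool_def if_distrib[of "\<lambda>x. x - _"] Int_def mult.commute conj_commute)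
  show ?thesis
    unfolding inv_coeff_def of_nat_mult[symmetric]
    by (simp add: weight[symmetric] sum_distrib_left mult_ac)
qed

lemma prim_root_unity_power_eq_1_iff:
  assumes "prim_root_unity e z" "e > 0"
  shows "z ^ n = 1 \<longleftrightarrow> e dvd n"
proof
  have ze: "z ^ e = 1" and minimal: "\<And>j. 0 < j \<Longrightarrow> j < e \<Longrightarrow> z ^ j \<noteq> 1"
    using assms(1) unfolding prim_root_unity_def by auto
  assume "z ^ n = 1"
  then have "z ^ (n mod e) = 1" using power_eq_power_mod[OF ze, of n] by simp
  then have "n mod e = 0" using minimal[of "n mod e"] assms(2) by auto
  then show "e dvd n" by auto
next
  assume "e dvd n"
  then show "z ^ n = 1" using assms(1) unfolding prim_root_unity_def by (auto simp: power_mult)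
qed

lemma eval_at_inv_coeff:
  assumes "m > 0" "e dvd m" "prim_root_unity e z"
  shows "eval_at m (inv_coeff m a) z = eval_at m (a e) z"
proof -
  have order: "\<And>n. z ^ n = 1 \<longleftrightarrow> e dvd n"
    using prim_root_unity_power_eq_1_iff[OF assms(3)] assms(1,2) dvd_pos_nat by blast
  then have "z ^ m = 1" using assms(2) by simp
  define E where "E d = eval_at m (a d) z" for d
  have shift: "(\<Sum>l<m. of_rat (a d (nat ((int l - int c) mod int m))) * z ^ l) = z ^ c * E d" for d c
    using sum_shift_mod_power[OF assms(1) \<open>z ^ m = 1\<close>] by (simp add: E_def eval_at_def)
  have "eval_at m (inv_coeff m a) z =
      (\<Sum>l<m. \<Sum>d | d dvd m. of_nat d / of_nat m * (\<Sum>k<m div dprime d.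
         inv_weight d k * (of_rat (a d (nat ((int l - int (k * dprime d)) mod int m))) * z ^ l)))"
    unfolding eval_at_def inv_coeff_eq
    by (simp add: of_rat_sum of_rat_mult of_rat_divide sum_distrib_left sum_distrib_right mult_ac)
  also have "\<dots> = (\<Sum>d | d dvd m. of_nat d / of_nat m * (\<Sum>k<m div dprime d.
         inv_weight d k * (\<Sum>l<m. of_rat (a d (nat ((int l - int (k * dprime d)) mod int m))) * z ^ l)))"
    by (subst sum.swap) (simp only: sum_distrib_left sum.swap[of _ "{..<m}"])
  also have "\<dots> = (\<Sum>d | d dvd m. of_nat d / of_nat m * (\<Sum>k<m div dprime d.
         inv_weight d k * (z ^ (k * dprime d) * E d)))"
    by (simp only: shift)
  also have "\<dots> = (\<Sum>d | d dvd m. E d *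
      (of_nat d / of_nat m * (\<Sum>k<m div dprime d. inv_weight d k * z ^ (k * dprime d))))"
    by (simp only: sum_distrib_left mult_ac)
  also have "\<dots> = (\<Sum>d | d dvd m. E d * of_bool (d = e))"
    using sum_inv_weight_root_of_unity[OF _ assms(2,1) order] by simp
  also have "\<dots> = E e"
    using assms(1,2) by simp
  finally show ?thesis by (simp add: E_def)
qed

theorem proposition5p3:
  fixes m :: nat and \<zeta> :: "nat \<Rightarrow> complex" and a :: "nat \<Rightarrow> nat \<Rightarrow> rat"
  assumes "m \<ge> 1"
    and "\<And>d. d dvd m \<Longrightarrow> prim_root_unity d (\<zeta> d)"
  shows "wedderburn m \<zeta> (inv_coeff m a)
           = (\<lambda>d. if d dvd m then eval_at m (a d) (\<zeta> d) else 0)"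
  using assms eval_at_inv_coeff by (auto simp: wedderburn_def)

end
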